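(* For every $\varepsilon>0$ there exists $\delta>0$ such that whenever $\mu$ is a positive Radon measure on $\mathbb{R}$ satisfying $\mu(I)\le(1+\delta)\mu(J)$ for all adjacent intervals $I,J$ of equal length, then for all $z$ in the upper half-plane $\mathbb{H}=\{\operatorname{Im}z>0\}$, \[\Big|\int_{\mathbb{R}}\frac{d\mu(t)}{(t-z)^2}\Big|\le\varepsilon\int_{\mathbb{R}}\frac{d\mu(t)}{|t-z|^2}<\infty.\] *)

theory Defs
  imports "HOL-Analysis.Analysis"
begin

definition radon_measure_real :: "real measure \<Rightarrow> bool" where
  "radon_measure_real M \<longleftrightarrow> sets M = sets borel \<and> (\<forall>K. compact K \<longrightarrow> emeasure M K < \<infinity>)"

definition adj_interval_cond :: "real \<Rightarrow> real measure \<Rightarrow> bool" where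
  "adj_interval_cond \<delta> M \<longleftrightarrow>
     (\<forall>x h. h > 0 \<longrightarrow>
        emeasure M {x - h..x} \<le> ennreal (1 + \<delta>) * emeasure M {x..x + h} \<and>
        emeasure M {x..x + h} \<le> ennreal (1 + \<delta>) * emeasure M {x - h..x})"

end

theory Submission
  imports Defs
begin

text \<open>
  Quasi-symmetric measures are nearly translation invariant at every scale; we show that
  then the second derivative of the Cauchy transform is small compared with the Poisson
  integral.  An affine change of variables sends z to i, so it suffices to treat z = i with
  the kernels cauchy2 s = 1/(s - i)^2 and poisson s = 1/(1 + s^2) = |cauchy2 s|.

  For z = i, fix a dyadic scale R = 2^K and a grid of mesh 1/n on [-R, R).
  (1) Doubling: mu[-2r, 2r] <= (3 + 2 delta) mu[-r, r], so the Poisson weight of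
      {|s| >= R} is at most a multiple of (7/8)^K mu[-1, 1]; in particular the Poisson
      integral is finite.
  (2) Consecutive grid cells have mass ratio at most 1 + delta, so for delta small all
      cells carry the mass of the first cell up to a factor 1 + eta.
  (3) On each cell the kernel is almost constant (it is 2-Lipschitz), so the integral over
      [-R, R) is the first cell's mass times a Riemann sum of cauchy2, which is small since
      cauchy2 has the primitive -1/(s - i), decaying at infinity.
  (4) The cells inside [-1, 1] show that n times the mass of a cell is bounded by the
      Poisson integral.
  Choosing K, then n, then eta, then delta makes all error terms smaller than epsilon.
\<close>

definition cauchy2 :: "real \<Rightarrow> complex" where
  "cauchy2 s = 1 / (complex_of_real s - \<i>)\<^sup>2"

definition poisson :: "real \<Rightarrow> real" where
  "poisson s = 1 / (1 + s\<^sup>2)"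

definition cauchy_primitive :: "real \<Rightarrow> complex" where
  "cauchy_primitive s = - 1 / (complex_of_real s - \<i>)"

lemma borel_measurable_cauchy2 [measurable]: "cauchy2 \<in> borel_measurable borel"
  unfolding cauchy2_def by measurable

lemma borel_measurable_poisson [measurable]: "poisson \<in> borel_measurable borel"
  unfolding poisson_def by measurable

lemma poisson_pos: "0 < poisson s"
  by (simp add: poisson_def add_pos_nonneg)

lemma poisson_le_1: "poisson s \<le> 1"
  by (simp add: poisson_def add_pos_nonneg)

lemma poisson_ge_half: "\<bar>s\<bar> \<le> 1 \<Longrightarrow> 1/2 \<le> poisson s"
  by (simp add: poisson_def le_divide_eq abs_square_le_1 add_pos_nonneg)

lemma norm_real_minus_i_sq: "(cmod (complex_of_real s - \<i>))\<^sup>2 = 1 + s\<^sup>2"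
  by (simp add: cmod_power2)

lemma norm_real_minus_i_ge_1: "1 \<le> cmod (complex_of_real s - \<i>)"
  using norm_real_minus_i_sq[of s] power2_nonneg_ge_1_iff[of "cmod (complex_of_real s - \<i>)"] by simp

lemma norm_cauchy2: "cmod (cauchy2 s) = poisson s"
  by (simp add: cauchy2_def poisson_def norm_divide norm_power norm_real_minus_i_sq)

text \<open>The kernel is 2-Lipschitz on the real line, since |s - i| >= 1.\<close>
lemma cauchy2_lipschitz: "cmod (cauchy2 s - cauchy2 a) \<le> 2 * \<bar>s - a\<bar>"
proof -
  define u where "u = complex_of_real s - \<i>"
  define v where "v = complex_of_real a - \<i>"
  have u: "1 \<le> cmod u" and v: "1 \<le> cmod v"
    using norm_real_minus_i_ge_1 by (auto simp: u_def v_def)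
  then have "u \<noteq> 0" "v \<noteq> 0" by auto
  then have eq: "1/u\<^sup>2 - 1/v\<^sup>2 = (v - u) * (v + u) / (u\<^sup>2 * v\<^sup>2)"
    by (simp add: field_simps power2_eq_square)
  have vu: "cmod (v - u) = \<bar>s - a\<bar>"
    by (simp add: u_def v_def flip: of_real_diff)
  have "cmod u + cmod v \<le> 2 * ((cmod u)\<^sup>2 * (cmod v)\<^sup>2)"
  proof -
    define x where "x = cmod u * cmod v"
    have "1 \<le> x" using mult_mono[OF u v] by (simp add: x_def)
    then have "x \<le> x\<^sup>2" by (simp add: power2_eq_square)
    moreover have "cmod u \<le> x" "cmod v \<le> x"
      using u v by (simp_all add: x_def mult_le_cancel_left1 mult_le_cancel_right1)
    ultimately show ?thesis by (simp add: x_def power_mult_distrib)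
  qed
  then have "cmod (v + u) / ((cmod u)\<^sup>2 * (cmod v)\<^sup>2) \<le> 2"
    using u v norm_triangle_ineq[of v u] by (simp add: divide_le_eq)
  then have "cmod (v - u) * cmod (v + u) / ((cmod u)\<^sup>2 * (cmod v)\<^sup>2) \<le> cmod (v - u) * 2"
    by (metis mult_left_mono norm_ge_zero times_divide_eq_right)
  then show ?thesis
    unfolding cauchy2_def u_def[symmetric] v_def[symmetric] eq
    by (simp add: norm_mult norm_divide norm_power vu mult.commute)
qed

lemma cauchy_primitive_taylor:
  "cmod (cauchy_primitive b - cauchy_primitive a - complex_of_real (b - a) * cauchy2 a) \<le> (b - a)\<^sup>2"
proof -
  define u where "u = complex_of_real a - \<i>"
  define v where "v = complex_of_real b - \<i>"
  have u: "1 \<le> cmod u" and v: "1 \<le> cmod v"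
    using norm_real_minus_i_ge_1 by (auto simp: u_def v_def)
  then have "u \<noteq> 0" "v \<noteq> 0" by auto
  moreover have d: "complex_of_real (b - a) = v - u" by (simp add: u_def v_def)
  ultimately have eq: "cauchy_primitive b - cauchy_primitive a - complex_of_real (b - a) * cauchy2 a
      = - (complex_of_real (b - a))\<^sup>2 / (u\<^sup>2 * v)"
    unfolding d by (simp add: cauchy_primitive_def cauchy2_def u_def[symmetric] v_def[symmetric]
        field_simps power2_eq_square)
  have "1 \<le> (cmod u)\<^sup>2 * cmod v"
    using u v by (metis mult_mono norm_ge_zero mult_1_left zero_le_one one_le_power zero_le_power)
  moreover have "cmod ((complex_of_real (b - a))\<^sup>2) = (b - a)\<^sup>2"
    by (simp only: norm_power norm_of_real power2_abs)
  ultimately show ?thesis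
    unfolding eq by (simp add: norm_mult norm_divide norm_power divide_le_eq mult_le_cancel_left1)
qed

text \<open>The primitive decays at infinity: the integral of cauchy2 over [-R, R] is O(1/R).\<close>
lemma cauchy_primitive_symmetric_difference:
  assumes "R > 0"
  shows "cmod (cauchy_primitive R - cauchy_primitive (- R)) \<le> 2 / R"
proof -
  have "complex_of_real R - \<i> \<noteq> 0" "complex_of_real (- R) - \<i> \<noteq> 0"
    using norm_real_minus_i_ge_1[of R] norm_real_minus_i_ge_1[of "- R"] by auto
  then have eq: "cauchy_primitive R - cauchy_primitive (- R) = complex_of_real (2 * R / (- 1 - R * R))"
    by (simp add: cauchy_primitive_def field_simps complex_eq_iff power2_eq_square)
  have "\<bar>2 * R / (- 1 - R * R)\<bar> = 2 * R / (1 + R * R)"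
  proof -
    have "\<bar>- 1 - R * R\<bar> = 1 + R * R" using zero_le_square[of R] by linarith
    then show ?thesis using assms by (simp add: abs_div)
  qed
  moreover have "2 * R / (1 + R * R) \<le> 2 / R"
    using assms by (simp add: divide_le_eq field_simps add_pos_nonneg)
  ultimately show ?thesis unfolding eq norm_of_real by linarith
qed

text \<open>Riemann sums of mesh 1/n over [-R, R) are close to the integral of cauchy2, which is
  small; unnormalised, the sum is at most 2R + 2n/R.\<close>
lemma cauchy2_riemann_sum:
  fixes R n :: nat
  assumes R: "R \<ge> 1" and n: "n \<ge> 1"
  shows "cmod (\<Sum>j<2*R*n. cauchy2 (- real R + real j / real n)) \<le> 2 * real R + 2 * real n / real R"
proof -
  define N where "N = 2*R*n"
  define a where "a j = - real R + real j / real n" for j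
  define err where "err j = cauchy_primitive (a (Suc j)) - cauchy_primitive (a j)
      - complex_of_real (1 / n) * cauchy2 (a j)" for j
  have np: "real n > 0" using n by simp
  have step: "a (Suc j) - a j = 1 / n" for j by (simp add: a_def add_divide_distrib)
  have err: "cmod (err j) \<le> (1 / n)\<^sup>2" for j
    using cauchy_primitive_taylor[of "a (Suc j)" "a j"] unfolding err_def step .
  have "(\<Sum>j<N. cauchy_primitive (a (Suc j)) - cauchy_primitive (a j))
      = cauchy_primitive R - cauchy_primitive (- real R)"
  proof -
    have "a N = R" "a 0 = - real R" using np by (simp_all add: a_def N_def)
    then show ?thesis using sum_lessThan_telescope[of "\<lambda>j. cauchy_primitive (a j)" N] by simp
  qed
  then have "(\<Sum>j<N. complex_of_real (1 / n) * cauchy2 (a j))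
      = (cauchy_primitive R - cauchy_primitive (- real R)) - (\<Sum>j<N. err j)"
    by (simp add: err_def sum_subtractf)
  then have "cmod (\<Sum>j<N. complex_of_real (1 / n) * cauchy2 (a j))
      \<le> cmod (cauchy_primitive R - cauchy_primitive (- real R)) + cmod (\<Sum>j<N. err j)"
    by (simp only: norm_triangle_ineq4)
  also have "\<dots> \<le> 2 / R + (\<Sum>j<N. (1 / n)\<^sup>2)"
    using R by (intro add_mono cauchy_primitive_symmetric_difference order_trans[OF norm_sum]
        sum_mono err) auto
  also have "(\<Sum>j<N. (1 / real n)\<^sup>2) = 2 * R / n"
    using np by (simp add: N_def power2_eq_square)
  finally have "cmod (\<Sum>j<N. complex_of_real (1 / n) * cauchy2 (a j)) \<le> 2 / R + 2 * R / n" .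
  moreover have "cmod (\<Sum>j<N. complex_of_real (1 / n) * cauchy2 (a j)) = cmod (\<Sum>j<N. cauchy2 (a j)) / n"
    unfolding sum_distrib_left[symmetric] norm_mult norm_of_real by simp
  ultimately show ?thesis
    using np by (simp add: N_def a_def field_simps)
qed

lemma poisson_dyadic_scale:
  assumes "2 ^ K \<le> \<bar>s\<bar>"
  shows "\<exists>k\<ge>K. \<bar>s\<bar> \<le> 2 ^ k \<and> poisson s \<le> 4 / 4 ^ k"
proof -
  obtain k0 where "\<bar>s\<bar> < 2 ^ k0" using real_arch_pow[of 2 "\<bar>s\<bar>"] by auto
  define k where "k = (LEAST k. \<bar>s\<bar> \<le> (2::real) ^ k)"
  have k: "\<bar>s\<bar> \<le> 2 ^ k"
    unfolding k_def by (rule LeastI[of _ k0]) (use \<open>\<bar>s\<bar> < 2 ^ k0\<close> in auto)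
  have "(2::real) ^ K \<le> 2 ^ k" using assms k by linarith
  then have "K \<le> k" by simp
  have "poisson s \<le> 4 / 4 ^ k"
  proof (cases k)
    case 0
    then show ?thesis using poisson_le_1[of s] by simp
  next
    case (Suc k')
    then have "\<not> \<bar>s\<bar> \<le> 2 ^ k'" unfolding k_def by (metis Suc_n_not_le_n Least_le k_def)
    then have "(2::real) ^ k' * 2 ^ k' < \<bar>s\<bar> * \<bar>s\<bar>" by (intro mult_strict_mono) auto
    then have "4 ^ k' < 1 + s\<^sup>2" by (simp add: power2_eq_square flip: power_mult_distrib)
    then have "poisson s \<le> 1 / 4 ^ k'"
      unfolding poisson_def by (intro divide_left_mono) (auto intro!: mult_pos_pos add_pos_nonneg)
    then show ?thesis using Suc by simp
  qed
  with \<open>K \<le> k\<close> k show ?thesis by blast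
qed

lemma poisson_dyadic_bound:
  assumes "2 ^ K \<le> \<bar>s\<bar>"
  shows "ennreal (poisson s)
    \<le> (\<Sum>n. ennreal (4 / 4 ^ (n + K)) * indicator {- (2 ^ (n + K)) .. 2 ^ (n + K)} s)"
proof -
  define F where "F n = ennreal (4 / 4 ^ (n + K)) * indicator {- (2 ^ (n + K)) .. 2 ^ (n + K)} s" for n
  obtain k where k: "k \<ge> K" "\<bar>s\<bar> \<le> 2 ^ k" "poisson s \<le> 4 / 4 ^ k"
    using poisson_dyadic_scale[OF assms] by blast
  then have "ennreal (poisson s) \<le> F (k - K)"
    by (auto simp: F_def ennreal_leI abs_le_iff)
  also have "F (k - K) = (\<Sum>n\<in>{k - K}. F n)" by simp
  also have "\<dots> \<le> suminf F" by (rule sum_le_suminf) (auto intro: summableI)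
  finally show ?thesis unfolding F_def .
qed

definition grid_cell :: "real \<Rightarrow> real \<Rightarrow> nat \<Rightarrow> real set" where
  "grid_cell c h j = {c + real j * h ..< c + real (Suc j) * h}"

lemma indicator_grid_cells:
  assumes "0 \<le> h"
  shows "indicator {c ..< c + real N * h} s = (\<Sum>j<N. indicator (grid_cell c h j) s :: real)"
proof (induction N)
  case (Suc N)
  have "{c ..< c + real (Suc N) * h} = {c ..< c + real N * h} \<union> grid_cell c h N"
    unfolding grid_cell_def
    by (intro ivl_disj_un_two(3)[symmetric]) (use assms in \<open>auto simp: algebra_simps\<close>)
  moreover have "{c ..< c + real N * h} \<inter> grid_cell c h N = {}" by (auto simp: grid_cell_def)
  ultimately show ?case using Suc by (simp add: indicator_disj_union)
qed simp

lemma grid_cell_shift: "grid_cell c h (k + i) = grid_cell (c + real k * h) h i"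
  by (simp add: grid_cell_def algebra_simps)

lemma comparable_masses:
  fixes m m0 \<eta> :: real
  assumes "m \<le> (1 + \<eta>) * m0" "m0 \<le> (1 + \<eta>) * m" "0 \<le> m" "0 \<le> m0" "0 \<le> \<eta>" "\<eta> \<le> 1"
  shows "\<bar>m - m0\<bar> \<le> 2 * \<eta> * m0" and "m \<le> 2 * m0" and "m0 \<le> 2 * m"
proof -
  have "\<eta> * m \<le> \<eta> * ((1 + \<eta>) * m0)" using assms by (intro mult_left_mono) auto
  moreover have "\<eta> * (\<eta> * m0) \<le> \<eta> * m0"
    using mult_left_le_one_le[of "\<eta> * m0" \<eta>] assms by simp
  ultimately show "\<bar>m - m0\<bar> \<le> 2 * \<eta> * m0"
    using assms unfolding abs_le_iff by (simp add: algebra_simps)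
  show "m \<le> 2 * m0" "m0 \<le> 2 * m"
    using assms mult_right_mono[of "1 + \<eta>" 2 m0] mult_right_mono[of "1 + \<eta>" 2 m] by auto
qed

locale quasi_symmetric =
  fixes \<nu> :: "real measure" and \<delta> :: real
  assumes sets_eq: "sets \<nu> = sets borel"
    and finite_intervals: "\<And>a b. emeasure \<nu> {a..b} < \<infinity>"
    and adjacent: "adj_interval_cond \<delta> \<nu>"
    and delta_nonneg: "0 \<le> \<delta>"
begin

lemma space_eq [simp]: "space \<nu> = UNIV"
  using sets_eq_imp_space_eq[OF sets_eq] by simp

lemma sets_iff [measurable_cong, simp]: "A \<in> sets \<nu> \<longleftrightarrow> A \<in> sets borel"
  using sets_eq by simp

lemma borel_measurable: "f \<in> borel_measurable borel \<Longrightarrow> f \<in> borel_measurable \<nu>"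
  using measurable_cong_sets[OF sets_eq refl] by blast

lemma emeasure_bounded_finite:
  "A \<subseteq> {a..b} \<Longrightarrow> A \<in> sets borel \<Longrightarrow> emeasure \<nu> A < \<infinity>"
  by (meson emeasure_mono finite_intervals le_less_trans sets_iff atLeastAtMost_borel)

lemma emeasure_bounded_eq:
  "A \<subseteq> {a..b} \<Longrightarrow> A \<in> sets borel \<Longrightarrow> emeasure \<nu> A = ennreal (measure \<nu> A)"
  by (intro emeasure_eq_ennreal_measure) (use emeasure_bounded_finite[of A a b] in auto)

lemma measure_mono_bounded:
  "A \<subseteq> B \<Longrightarrow> B \<subseteq> {a..b} \<Longrightarrow> A \<in> sets borel \<Longrightarrow> B \<in> sets borel
    \<Longrightarrow> measure \<nu> A \<le> measure \<nu> B"
  by (intro measure_mono_fmeasurable)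
    (use emeasure_bounded_finite[of B a b] in \<open>auto simp: fmeasurable_def\<close>)

lemma adjacent_measure:
  assumes "h > 0"
  shows "measure \<nu> {x - h..x} \<le> (1 + \<delta>) * measure \<nu> {x..x + h}"
    and "measure \<nu> {x..x + h} \<le> (1 + \<delta>) * measure \<nu> {x - h..x}"
proof -
  have "emeasure \<nu> {x - h..x} = ennreal (measure \<nu> {x - h..x})"
    and "emeasure \<nu> {x..x + h} = ennreal (measure \<nu> {x..x + h})"
    by (rule emeasure_bounded_eq; auto)+
  moreover have "emeasure \<nu> {x - h..x} \<le> ennreal (1 + \<delta>) * emeasure \<nu> {x..x + h}"
    and "emeasure \<nu> {x..x + h} \<le> ennreal (1 + \<delta>) * emeasure \<nu> {x - h..x}"
    using adjacent assms unfolding adj_interval_cond_def by blast+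
  ultimately have "ennreal (measure \<nu> {x - h..x}) \<le> ennreal ((1 + \<delta>) * measure \<nu> {x..x + h})"
    and "ennreal (measure \<nu> {x..x + h}) \<le> ennreal ((1 + \<delta>) * measure \<nu> {x - h..x})"
    using delta_nonneg by (auto simp: ennreal_mult)
  then show "measure \<nu> {x - h..x} \<le> (1 + \<delta>) * measure \<nu> {x..x + h}"
    and "measure \<nu> {x..x + h} \<le> (1 + \<delta>) * measure \<nu> {x - h..x}"
    using delta_nonneg by (auto simp: ennreal_le_iff)
qed

text \<open>Quasi-symmetry forbids atoms: the mass of a point is dominated by the masses of
  the adjacent intervals of length h, which tend to zero as h shrinks.\<close>
lemma measure_singleton: "measure \<nu> {a} = 0"
proof -
  define A where "A k = {a<..a + 1 / Suc k}" for k :: nat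
  have A_bounded: "A k \<subseteq> {a..a + 1}" for k
    by (auto simp: A_def) (smt (verit) divide_le_eq_1 of_nat_0_le_iff)
  have "(\<lambda>k. measure \<nu> (A k)) \<longlonglongrightarrow> measure \<nu> (\<Inter>k. A k)"
  proof (rule Lim_measure_decseq)
    show "range A \<subseteq> sets \<nu>" by (auto simp: A_def)
    show "decseq A"
    proof (rule decseq_SucI)
      fix k
      have "1 / real (Suc (Suc k)) \<le> 1 / real (Suc k)" by (rule divide_left_mono) auto
      then show "A (Suc k) \<subseteq> A k" by (fastforce simp: A_def)
    qed
    show "emeasure \<nu> (A k) \<noteq> \<infinity>" for k
      using emeasure_bounded_finite[OF A_bounded[of k]] by (auto simp: A_def)
  qed
  moreover have "s \<notin> (\<Inter>k. A k)" for s
  proof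
    assume s: "s \<in> (\<Inter>k. A k)"
    then have "s > a" by (auto simp: A_def)
    then obtain k where "1 / real (Suc k) < s - a"
      by (metis diff_gt_0_iff_gt inverse_eq_divide reals_Archimedean)
    moreover have "s \<le> a + 1 / real (Suc k)" using s by (auto simp: A_def)
    ultimately show False by linarith
  qed
  ultimately have A_null: "(\<lambda>k. measure \<nu> (A k)) \<longlonglongrightarrow> 0"
    by (metis measure_empty equals0I)
  have "measure \<nu> {a} \<le> (1 + \<delta>) * measure \<nu> (A k)" for k
  proof -
    define h where "h = 1 / (2 * real (Suc k))"
    have h: "h > 0" by (simp add: h_def)
    have "a + h + h = a + 1 / Suc k" by (simp add: h_def field_simps)
    then have "{a + h..a + h + h} \<subseteq> A k" using h by (auto simp: A_def)
    have "measure \<nu> {a} \<le> measure \<nu> {a..a + h}"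
      by (rule measure_mono_bounded[of _ _ a "a + h"]) (use h in auto)
    also have "\<dots> \<le> (1 + \<delta>) * measure \<nu> {a + h..a + h + h}"
      using adjacent_measure(1)[OF h, of "a + h"] by simp
    also have "\<dots> \<le> (1 + \<delta>) * measure \<nu> (A k)"
      using delta_nonneg \<open>{a + h..a + h + h} \<subseteq> A k\<close> A_bounded[of k]
      by (intro mult_left_mono measure_mono_bounded[of _ _ a "a + 1"]) (auto simp: A_def)
    finally show ?thesis .
  qed
  then have "measure \<nu> {a} \<le> (1 + \<delta>) * 0"
    by (intro LIMSEQ_le_const[OF tendsto_mult_left[OF A_null]]) auto
  then show ?thesis by (simp add: measure_nonneg antisym)
qed

text \<open>Since points are null, half-open and closed intervals have the same measure.\<close>
lemma measure_atLeastLessThan: "measure \<nu> {a..<b} = measure \<nu> {a..b}"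
proof (cases "a \<le> b")
  case True
  have "{a} \<in> null_sets \<nu>"
    using measure_singleton[of a] emeasure_bounded_eq[of "{a}" a a] by (auto simp: null_sets_def)
  moreover have "{a..b} = {a..<b} \<union> {b}" using True by auto
  ultimately show ?thesis
    using measure_Un_null_set[of "{a..<b}" \<nu> "{b}"] measure_singleton[of b]
      emeasure_bounded_eq[of "{b}" b b] by (auto simp: null_sets_def)
qed simp


text \<open>Doubling: [-2r, 2r] consists of [-r, r] and two intervals adjacent to its halves.\<close>
lemma doubling:
  assumes "r > 0"
  shows "measure \<nu> {- (2 * r)..2 * r} \<le> (3 + 2 * \<delta>) * measure \<nu> {- r..r}"
proof -
  let ?m = "measure \<nu>"
  have split: "{- (2 * r)..2 * r} = ({- (2 * r)..- r} \<union> {- r..r}) \<union> {r..2 * r}"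
    using assms by auto
  have "?m {- (2 * r)..2 * r} \<le> ?m ({- (2 * r)..- r} \<union> {- r..r}) + ?m {r..2 * r}"
    unfolding split by (rule measure_Un_le) auto
  also have "\<dots> \<le> ?m {- (2 * r)..- r} + ?m {- r..r} + ?m {r..2 * r}"
    by (intro add_right_mono measure_Un_le) auto
  also have "?m {- (2 * r)..- r} \<le> (1 + \<delta>) * ?m {- r..0}"
    using adjacent_measure(1)[OF assms, of "- r"] by (simp add: algebra_simps)
  also have "?m {r..2 * r} \<le> (1 + \<delta>) * ?m {0..r}"
    using adjacent_measure(2)[OF assms, of r] by (simp add: algebra_simps)
  also have "(1 + \<delta>) * ?m {- r..0} \<le> (1 + \<delta>) * ?m {- r..r}"
    using delta_nonneg by (intro mult_left_mono measure_mono_bounded[of _ _ "- r" r]) (use assms in auto)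
  also have "(1 + \<delta>) * ?m {0..r} \<le> (1 + \<delta>) * ?m {- r..r}"
    using delta_nonneg by (intro mult_left_mono measure_mono_bounded[of _ _ "- r" r]) (use assms in auto)
  finally show ?thesis by (simp add: algebra_simps)
qed

lemma doubling_power:
  "measure \<nu> {- (2 ^ k)..2 ^ k} \<le> (3 + 2 * \<delta>) ^ k * measure \<nu> {- 1..1}"
proof (induction k)
  case (Suc k)
  have "measure \<nu> {- (2 ^ Suc k)..2 ^ Suc k} \<le> (3 + 2 * \<delta>) * measure \<nu> {- (2 ^ k)..2 ^ k}"
    using doubling[of "2 ^ k"] by simp
  also have "\<dots> \<le> (3 + 2 * \<delta>) * ((3 + 2 * \<delta>) ^ k * measure \<nu> {- 1..1})"
    using Suc delta_nonneg by (intro mult_left_mono) auto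
  finally show ?case by simp
qed simp

lemma grid_cell_measure_step:
  assumes "h > 0"
  shows "measure \<nu> (grid_cell c h (Suc j)) \<le> (1 + \<delta>) * measure \<nu> (grid_cell c h j)"
    and "measure \<nu> (grid_cell c h j) \<le> (1 + \<delta>) * measure \<nu> (grid_cell c h (Suc j))"
proof -
  define x where "x = c + real (Suc j) * h"
  have cells: "grid_cell c h j = {x - h..<x}" "grid_cell c h (Suc j) = {x..<x + h}"
    by (auto simp: grid_cell_def x_def algebra_simps)
  show "measure \<nu> (grid_cell c h (Suc j)) \<le> (1 + \<delta>) * measure \<nu> (grid_cell c h j)"
    and "measure \<nu> (grid_cell c h j) \<le> (1 + \<delta>) * measure \<nu> (grid_cell c h (Suc j))"
    unfolding cells measure_atLeastLessThan using adjacent_measure[OF assms] by auto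
qed

lemma grid_cell_measure_power:
  assumes "h > 0"
  shows "measure \<nu> (grid_cell c h j) \<le> (1 + \<delta>) ^ j * measure \<nu> (grid_cell c h 0)
    \<and> measure \<nu> (grid_cell c h 0) \<le> (1 + \<delta>) ^ j * measure \<nu> (grid_cell c h j)"
proof (induction j)
  case (Suc j)
  let ?m = "\<lambda>j. measure \<nu> (grid_cell c h j)"
  have "?m (Suc j) \<le> (1 + \<delta>) * ((1 + \<delta>) ^ j * ?m 0)"
    using grid_cell_measure_step(1)[OF assms, of c j] Suc delta_nonneg
    by (meson mult_left_mono order_trans add_nonneg_nonneg zero_le_one)
  moreover have "?m 0 \<le> (1 + \<delta>) ^ j * ((1 + \<delta>) * ?m (Suc j))"
    using grid_cell_measure_step(2)[OF assms, of c j] Suc delta_nonneg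
    by (meson mult_left_mono order_trans zero_le_power add_nonneg_nonneg zero_le_one)
  ultimately show ?case by (simp add: mult_ac)
qed simp

lemma grid_cells_comparable:
  fixes c h \<eta> :: real and j N :: nat
  assumes h: "0 < h" and \<eta>: "0 \<le> \<eta>" "\<eta> \<le> 1" and growth: "(1 + \<delta>) ^ N \<le> 1 + \<eta>" and j: "j < N"
  defines "m \<equiv> \<lambda>j. measure \<nu> (grid_cell c h j)"
  shows "\<bar>m j - m 0\<bar> \<le> 2 * \<eta> * m 0" and "m j \<le> 2 * m 0" and "m 0 \<le> 2 * m j"
proof -
  have "(1 + \<delta>) ^ j \<le> 1 + \<eta>"
    using delta_nonneg j growth by (intro order_trans[OF power_increasing[of j N]]) auto
  then have "m j \<le> (1 + \<eta>) * m 0" "m 0 \<le> (1 + \<eta>) * m j"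
    using grid_cell_measure_power[OF h, of c j] unfolding m_def
    by (meson measure_nonneg mult_right_mono order_trans)+
  then show "\<bar>m j - m 0\<bar> \<le> 2 * \<eta> * m 0" and "m j \<le> 2 * m 0" and "m 0 \<le> 2 * m j"
    using comparable_masses \<eta> by (simp_all add: m_def)
qed


lemma emeasure_grid_cell_finite: "emeasure \<nu> (grid_cell c h j) < \<infinity>"
  unfolding grid_cell_def
  by (rule emeasure_bounded_finite[of _ "c + real j * h" "c + real (Suc j) * h"]) auto

lemma measure_grid_cells:
  assumes "0 \<le> h"
  shows "measure \<nu> {c..<c + real N * h} = (\<Sum>j<N. measure \<nu> (grid_cell c h j))"
proof -
  have cell_integrable: "integrable \<nu> (indicator (grid_cell c h j) :: real \<Rightarrow> real)" for j
    using emeasure_grid_cell_finite by (simp add: grid_cell_def integrable_indicator_iff)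
  have "measure \<nu> {c..<c + real N * h} = (\<integral>s. indicator {c..<c + real N * h} s \<partial>\<nu>)"
    using emeasure_bounded_finite[of "{c..<c + real N * h}" c "c + real N * h"] by simp
  also have "\<dots> = (\<integral>s. (\<Sum>j<N. indicator (grid_cell c h j) s) \<partial>\<nu>)"
    using indicator_grid_cells[OF assms] by simp
  also have "\<dots> = (\<Sum>j<N. measure \<nu> (grid_cell c h j))"
    using cell_integrable by (simp add: Bochner_Integration.integral_sum grid_cell_def)
  finally show ?thesis .
qed


lemma integral_grid_split:
  fixes f :: "real \<Rightarrow> 'b::{banach, second_countable_topology}"
  assumes f: "integrable \<nu> f" and h: "0 \<le> h"
  shows "(\<integral>s. f s \<partial>\<nu>) = (\<Sum>j<N. \<integral>s. indicator (grid_cell c h j) s *\<^sub>R f s \<partial>\<nu>)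
    + (\<integral>s. indicator (- {c..<c + real N * h}) s *\<^sub>R f s \<partial>\<nu>)"
proof -
  have "f s = (\<Sum>j<N. indicator (grid_cell c h j) s *\<^sub>R f s)
      + indicator (- {c..<c + real N * h}) s *\<^sub>R f s" for s
    using indicator_grid_cells[OF h, of c N s]
    by (auto simp: indicator_def simp flip: scaleR_sum_left)
  then have "(\<integral>s. f s \<partial>\<nu>) = (\<integral>s. (\<Sum>j<N. indicator (grid_cell c h j) s *\<^sub>R f s)
      + indicator (- {c..<c + real N * h}) s *\<^sub>R f s \<partial>\<nu>)"
    by simp
  also have "\<dots> = (\<integral>s. (\<Sum>j<N. indicator (grid_cell c h j) s *\<^sub>R f s) \<partial>\<nu>)
      + (\<integral>s. indicator (- {c..<c + real N * h}) s *\<^sub>R f s \<partial>\<nu>)"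
    using f by (intro Bochner_Integration.integral_add Bochner_Integration.integrable_sum
        integrable_mult_indicator) (auto simp: grid_cell_def)
  also have "(\<integral>s. (\<Sum>j<N. indicator (grid_cell c h j) s *\<^sub>R f s) \<partial>\<nu>)
      = (\<Sum>j<N. \<integral>s. indicator (grid_cell c h j) s *\<^sub>R f s \<partial>\<nu>)"
    using f by (intro Bochner_Integration.integral_sum integrable_mult_indicator)
      (auto simp: grid_cell_def)
  finally show ?thesis .
qed

text \<open>On a cell of length h the kernel deviates from its value at the left endpoint
  by at most 2h (Lipschitz bound), so the cell integral is a Riemann-sum term up to this error.\<close>
lemma cell_integral_cauchy2:
  fixes c h :: real and j :: nat
  defines "P \<equiv> grid_cell c h j"
  assumes h: "0 < h"
  shows "cmod ((\<integral>s. indicator P s *\<^sub>R cauchy2 s \<partial>\<nu>)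
      - complex_of_real (measure \<nu> P) * cauchy2 (c + real j * h)) \<le> 2 * h * measure \<nu> P"
proof -
  define a where "a = c + real j * h"
  have P_ind: "integrable \<nu> (indicator P :: real \<Rightarrow> real)"
    using emeasure_grid_cell_finite by (simp add: P_def grid_cell_def integrable_indicator_iff)
  have P_f: "integrable \<nu> (\<lambda>s. indicator P s *\<^sub>R cauchy2 s)"
    by (rule Bochner_Integration.integrable_bound[OF P_ind])
      (auto simp: P_def grid_cell_def norm_cauchy2 poisson_le_1 indicator_def intro: borel_measurable)
  have P_const: "integrable \<nu> (\<lambda>s. indicator P s *\<^sub>R cauchy2 a)"
    using P_ind by (rule integrable_scaleR_left)
  have "complex_of_real (measure \<nu> P) * cauchy2 a = (\<integral>s. indicator P s *\<^sub>R cauchy2 a \<partial>\<nu>)"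
    using P_ind by (simp add: scaleR_conv_of_real)
  then have "(\<integral>s. indicator P s *\<^sub>R cauchy2 s \<partial>\<nu>) - complex_of_real (measure \<nu> P) * cauchy2 a
      = (\<integral>s. indicator P s *\<^sub>R (cauchy2 s - cauchy2 a) \<partial>\<nu>)"
    unfolding scaleR_diff_right using Bochner_Integration.integral_diff[OF P_f P_const] by simp
  also have "cmod \<dots> \<le> (\<integral>s. indicator P s * (2 * h) \<partial>\<nu>)"
  proof (rule Bochner_Integration.integral_norm_bound_integral)
    show "integrable \<nu> (\<lambda>s. indicator P s *\<^sub>R (cauchy2 s - cauchy2 a))"
      using P_ind P_f by (simp add: scaleR_diff_right)
    show "integrable \<nu> (\<lambda>s. indicator P s * (2 * h))" using P_ind by simp
    have "cmod (cauchy2 s - cauchy2 a) \<le> 2 * h" if "s \<in> P" for s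
      using that cauchy2_lipschitz[of s a]
      by (auto simp: P_def grid_cell_def a_def algebra_simps)
    then show "cmod (indicator P s *\<^sub>R (cauchy2 s - cauchy2 a)) \<le> indicator P s * (2 * h)" for s
      by (simp add: indicator_def)
  qed
  also have "\<dots> = 2 * h * measure \<nu> P" using P_ind by simp
  finally show ?thesis by (simp add: a_def)
qed

end

text \<open>For small quasi-symmetry constant the measure doubles at most by the factor 7/2,
  which is slower than the decay 1/4 of the Poisson weight on dyadic scales.\<close>
locale quasi_symmetric_small = quasi_symmetric +
  assumes delta_small: "\<delta> \<le> 1/4"
begin

lemma measure_dyadic_interval: "measure \<nu> {- (2 ^ k)..2 ^ k} \<le> (7/2) ^ k * measure \<nu> {- 1..1}"
proof -
  have "(3 + 2 * \<delta>) ^ k \<le> (7/2) ^ k"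
    using delta_nonneg delta_small by (intro power_mono) auto
  then show ?thesis
    using doubling_power[of k] by (meson measure_nonneg mult_right_mono order_trans)
qed

text \<open>The weight outside [-2^K, 2^K) has integral O((7/8)^K) relative to the mass of [-1, 1]:
  on the k-th dyadic interval the weight is 4/4^k while the mass is at most (7/2)^k mu[-1, 1].\<close>
lemma poisson_tail_nn_integral:
  "(\<integral>\<^sup>+s. ennreal (poisson s) * indicator {s. 2 ^ K \<le> \<bar>s\<bar>} s \<partial>\<nu>)
    \<le> ennreal (32 * (7/8) ^ K * measure \<nu> {- 1..1})"
proof -
  define B where "B n = {- (2 ^ (n + K))..(2::real) ^ (n + K)}" for n
  define m1 where "m1 = measure \<nu> {- 1..1}"
  have "(\<integral>\<^sup>+s. ennreal (poisson s) * indicator {s. 2 ^ K \<le> \<bar>s\<bar>} s \<partial>\<nu>)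
      \<le> (\<integral>\<^sup>+s. (\<Sum>n. ennreal (4 / 4 ^ (n + K)) * indicator (B n) s) \<partial>\<nu>)"
    using poisson_dyadic_bound[of K] by (intro nn_integral_mono) (auto simp: B_def indicator_def)
  also have "\<dots> = (\<Sum>n. \<integral>\<^sup>+s. ennreal (4 / 4 ^ (n + K)) * indicator (B n) s \<partial>\<nu>)"
    by (rule nn_integral_suminf) (simp add: B_def borel_measurable)
  also have "\<dots> = (\<Sum>n. ennreal (4 / 4 ^ (n + K)) * emeasure \<nu> (B n))"
    by (simp add: B_def nn_integral_cmult_indicator)
  also have "\<dots> \<le> (\<Sum>n. ennreal (4 * m1 * (7/8) ^ (n + K)))"
  proof (rule suminf_le[OF _ summableI summableI])
    fix n
    have "emeasure \<nu> (B n) = ennreal (measure \<nu> (B n))"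
      unfolding B_def by (rule emeasure_bounded_eq) auto
    moreover have "4 / 4 ^ (n + K) * measure \<nu> (B n) \<le> 4 / 4 ^ (n + K) * ((7/2) ^ (n + K) * m1)"
      unfolding B_def m1_def by (intro mult_left_mono measure_dyadic_interval) auto
    moreover have "4 / 4 ^ (n + K) * ((7/2) ^ (n + K) * m1) = 4 * m1 * (7/8::real) ^ (n + K)"
      by (simp add: power_divide field_simps flip: power_mult_distrib)
    ultimately show "ennreal (4 / 4 ^ (n + K)) * emeasure \<nu> (B n) \<le> ennreal (4 * m1 * (7/8) ^ (n + K))"
      by (simp add: ennreal_leI flip: ennreal_mult)
  qed
  also have "\<dots> = ennreal (\<Sum>n. 4 * m1 * (7/8) ^ (n + K))"
    by (rule suminf_ennreal2)
      (auto simp: m1_def intro!: summable_mult summable_ignore_initial_segment summable_geometric)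
  also have "(\<Sum>n. 4 * m1 * (7/8::real) ^ (n + K)) = 32 * (7/8) ^ K * m1"
  proof -
    have "(\<Sum>n. 4 * m1 * (7/8::real) ^ (n + K)) = (\<Sum>n. (4 * m1 * (7/8) ^ K) * (7/8::real) ^ n)"
      by (simp add: power_add mult_ac)
    also have "\<dots> = (4 * m1 * (7/8) ^ K) * (\<Sum>n. (7/8::real) ^ n)"
      by (rule suminf_mult) (simp add: summable_geometric)
    finally show ?thesis by (simp add: suminf_geometric)
  qed
  finally show ?thesis by (simp add: m1_def)
qed

lemma poisson_nn_integral_finite: "(\<integral>\<^sup>+s. ennreal (poisson s) \<partial>\<nu>) < \<infinity>"
proof -
  have "ennreal (poisson s) \<le> indicator {- 1..1} s + ennreal (poisson s) * indicator {s. 2 ^ 0 \<le> \<bar>s\<bar>} s"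
    for s
    using poisson_le_1[of s] by (auto simp: indicator_def)
  then have "(\<integral>\<^sup>+s. ennreal (poisson s) \<partial>\<nu>)
      \<le> (\<integral>\<^sup>+s. indicator {- 1..1} s + ennreal (poisson s) * indicator {s. 2 ^ 0 \<le> \<bar>s\<bar>} s \<partial>\<nu>)"
    by (intro nn_integral_mono)
  also have "\<dots> = emeasure \<nu> {- 1..1}
      + (\<integral>\<^sup>+s. ennreal (poisson s) * indicator {s. 2 ^ 0 \<le> \<bar>s\<bar>} s \<partial>\<nu>)"
    by (subst nn_integral_add) (auto intro: borel_measurable)
  also have "\<dots> < \<infinity>"
    using finite_intervals[of "- 1" 1] poisson_tail_nn_integral[of 0]
    by (simp add: ennreal_add_less_top le_less_trans)
  finally show ?thesis .
qed

lemma integrable_poisson: "integrable \<nu> poisson"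
  using poisson_nn_integral_finite poisson_pos
  by (intro integrableI_nonneg) (auto intro: borel_measurable less_imp_le)

lemma integrable_cauchy2: "integrable \<nu> cauchy2"
  by (rule Bochner_Integration.integrable_bound[OF integrable_poisson])
    (auto simp: norm_cauchy2 intro: borel_measurable)

lemma poisson_tail_integral:
  "(\<integral>s. poisson s * indicator {s. 2 ^ K \<le> \<bar>s\<bar>} s \<partial>\<nu>) \<le> 32 * (7/8) ^ K * measure \<nu> {- 1..1}"
proof -
  have "integrable \<nu> (\<lambda>s. poisson s * indicator {s. 2 ^ K \<le> \<bar>s\<bar>} s)"
    by (rule integrable_real_mult_indicator[OF _ integrable_poisson]) simp
  then have "ennreal (\<integral>s. poisson s * indicator {s. 2 ^ K \<le> \<bar>s\<bar>} s \<partial>\<nu>)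
      = (\<integral>\<^sup>+s. ennreal (poisson s * indicator {s. 2 ^ K \<le> \<bar>s\<bar>} s) \<partial>\<nu>)"
    using poisson_pos by (intro nn_integral_eq_integral[symmetric]) (auto simp: less_imp_le)
  also have "\<dots> = (\<integral>\<^sup>+s. ennreal (poisson s) * indicator {s. 2 ^ K \<le> \<bar>s\<bar>} s \<partial>\<nu>)"
    by (intro nn_integral_cong) (simp add: indicator_def)
  also have "\<dots> \<le> ennreal (32 * (7/8) ^ K * measure \<nu> {- 1..1})"
    by (rule poisson_tail_nn_integral)
  finally show ?thesis by (simp add: ennreal_le_iff)
qed

text \<open>The Poisson weight is at least 1/2 on [-1, 1], so the integral of the weight
  controls the mass of the unit interval.\<close>
lemma measure_unit_interval: "measure \<nu> {- 1..1} \<le> 2 * (\<integral>s. poisson s \<partial>\<nu>)"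
proof -
  have "(\<integral>s. indicator {- 1..1} s * (1/2::real) \<partial>\<nu>) \<le> (\<integral>s. poisson s \<partial>\<nu>)"
    using poisson_ge_half poisson_pos
    by (intro integral_mono'[OF integrable_poisson]) (auto simp: indicator_def less_imp_le)
  then show ?thesis using finite_intervals[of "- 1" 1] by simp
qed

lemma cauchy2_tail:
  "cmod (\<integral>s. indicator (- {- (2 ^ K)..<2 ^ K}) s *\<^sub>R cauchy2 s \<partial>\<nu>)
    \<le> 64 * (7/8) ^ K * (\<integral>s. poisson s \<partial>\<nu>)"
proof -
  have "cmod (\<integral>s. indicator (- {- (2 ^ K)..<2 ^ K}) s *\<^sub>R cauchy2 s \<partial>\<nu>)
      \<le> (\<integral>s. poisson s * indicator {s. 2 ^ K \<le> \<bar>s\<bar>} s \<partial>\<nu>)"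
  proof (rule Bochner_Integration.integral_norm_bound_integral)
    show "integrable \<nu> (\<lambda>s. indicator (- {- (2 ^ K)..<2 ^ K}) s *\<^sub>R cauchy2 s)"
      by (rule integrable_mult_indicator[OF _ integrable_cauchy2]) simp
    show "integrable \<nu> (\<lambda>s. poisson s * indicator {s. 2 ^ K \<le> \<bar>s\<bar>} s)"
      by (rule integrable_real_mult_indicator[OF _ integrable_poisson]) simp
    show "cmod (indicator (- {- (2 ^ K)..<2 ^ K}) s *\<^sub>R cauchy2 s)
        \<le> poisson s * indicator {s. 2 ^ K \<le> \<bar>s\<bar>} s" for s
      using poisson_pos[of s] by (auto simp: indicator_def norm_cauchy2)
  qed
  also have "\<dots> \<le> 32 * (7/8) ^ K * (2 * (\<integral>s. poisson s \<partial>\<nu>))"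
    by (intro order_trans[OF poisson_tail_integral] mult_left_mono measure_unit_interval) auto
  finally show ?thesis by simp
qed


text \<open>The cells of the grid of mesh 1/n on [-R, R) carry nearly equal masses m_j, so the
  cell integrals add up to m_0 times a Riemann sum of the kernel, which is small because the
  kernel has a primitive decaying at infinity.\<close>
lemma grid_sum_estimate:
  fixes R n :: nat and \<eta> :: real
  assumes R: "R \<ge> 1" and n: "n \<ge> 1" and \<eta>: "0 \<le> \<eta>" "\<eta> \<le> 1"
    and growth: "(1 + \<delta>) ^ (2 * R * n) \<le> 1 + \<eta>"
  defines "P \<equiv> grid_cell (- real R) (1 / n)"
  shows "cmod (\<Sum>j<2 * R * n. \<integral>s. indicator (P j) s *\<^sub>R cauchy2 s \<partial>\<nu>)
    \<le> measure \<nu> (P 0) * (10 * real R + 4 * real R * real n * \<eta> + 2 * real n / real R)"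
proof -
  define N where "N = 2 * R * n"
  define a where "a j = - real R + real j * (1 / n)" for j
  define m where "m j = measure \<nu> (P j)" for j
  define I where "I j = (\<integral>s. indicator (P j) s *\<^sub>R cauchy2 s \<partial>\<nu>)" for j
  have np: "real n > 0" using n by simp
  have comparable: "\<bar>m j - m 0\<bar> \<le> 2 * \<eta> * m 0" "m j \<le> 2 * m 0" if "j < N" for j
    using grid_cells_comparable[of "1 / n" \<eta> N j] np \<eta> growth that
    by (simp_all add: m_def P_def N_def)
  have "(\<Sum>j<N. I j) = (\<Sum>j<N. I j - of_real (m j) * cauchy2 (a j))
      + (\<Sum>j<N. of_real (m j - m 0) * cauchy2 (a j)) + of_real (m 0) * (\<Sum>j<N. cauchy2 (a j))"
    by (simp add: sum_subtractf sum_distrib_left algebra_simps flip: sum.distrib)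
  also have "cmod \<dots> \<le> (\<Sum>j<N. 2 / n * (2 * m 0)) + (\<Sum>j<N. 2 * \<eta> * m 0)
      + m 0 * (2 * R + 2 * n / R)"
  proof (intro order_trans[OF norm_triangle_ineq] add_mono order_trans[OF norm_sum] sum_mono)
    fix j assume "j \<in> {..<N}"
    then have j: "j < N" by simp
    have "cmod (I j - of_real (m j) * cauchy2 (a j)) \<le> 2 * (1 / n) * m j"
      using cell_integral_cauchy2[of "1 / n" "- real R" j] np
      by (simp add: I_def m_def P_def a_def)
    also have "\<dots> \<le> 2 / n * (2 * m 0)"
      using comparable(2)[OF j] np by (simp add: field_simps)
    finally show "cmod (I j - of_real (m j) * cauchy2 (a j)) \<le> 2 / n * (2 * m 0)" .
    have "\<bar>m j - m 0\<bar> * poisson (a j) \<le> 2 * \<eta> * m 0 * 1"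
      using comparable(1)[OF j] poisson_le_1[of "a j"] poisson_pos[of "a j"]
      by (intro mult_mono) auto
    then show "cmod (of_real (m j - m 0) * cauchy2 (a j)) \<le> 2 * \<eta> * m 0"
      by (simp add: norm_mult norm_cauchy2 del: of_real_diff)
  next
    have "cmod (\<Sum>j<N. cauchy2 (a j)) \<le> 2 * R + 2 * n / R"
      using cauchy2_riemann_sum[OF R n] by (simp add: a_def N_def)
    then show "cmod (of_real (m 0) * (\<Sum>j<N. cauchy2 (a j))) \<le> m 0 * (2 * R + 2 * n / R)"
      by (simp add: norm_mult m_def mult_left_mono)
  qed
  also have "\<dots> = m 0 * (10 * R + 4 * R * n * \<eta> + 2 * n / R)"
    using np by (simp add: N_def field_simps)
  finally show ?thesis by (simp add: I_def m_def N_def)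
qed

text \<open>The 2n middle cells tile [-1, 1), where the Poisson weight is at least 1/2;
  since each carries at least half the mass of the base cell, n times that mass is
  controlled by the weighted integral.\<close>
lemma grid_base_cell_measure:
  fixes R n :: nat
  defines "P \<equiv> grid_cell (- real R) (1 / n)"
  assumes R: "R \<ge> 1" and n: "n \<ge> 1"
    and comparable: "\<And>j. j < 2 * R * n \<Longrightarrow> measure \<nu> (P 0) \<le> 2 * measure \<nu> (P j)"
  shows "real n * measure \<nu> (P 0) \<le> 2 * (\<integral>s. poisson s \<partial>\<nu>)"
proof -
  define k where "k = (R - 1) * n"
  have np: "real n > 0" using n by simp
  have "- real R + real k * (1 / n) = - 1" using np R by (simp add: k_def of_nat_diff field_simps)
  then have shift: "P (k + i) = grid_cell (- 1) (1 / n) i" for i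
    unfolding P_def grid_cell_shift by simp
  have "(\<Sum>i<2 * n. measure \<nu> (P 0) / 2) \<le> (\<Sum>i<2 * n. measure \<nu> (P (k + i)))"
  proof (rule sum_mono)
    fix i assume "i \<in> {..<2 * n}"
    then have "k + i < (R - 1) * n + 2 * n" by (simp add: k_def)
    also have "\<dots> = (R + 1) * n" using R by (simp add: algebra_simps diff_mult_distrib)
    also have "\<dots> \<le> 2 * R * n" using R by simp
    finally have "k + i < 2 * R * n" .
    then show "measure \<nu> (P 0) / 2 \<le> measure \<nu> (P (k + i))" using comparable by fastforce
  qed
  also have "\<dots> = measure \<nu> {- 1..<- 1 + real (2 * n) * (1 / n)}"
    unfolding shift by (rule measure_grid_cells[symmetric]) simp
  also have "\<dots> = measure \<nu> {- 1..1}" using np by (simp add: measure_atLeastLessThan)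
  also have "\<dots> \<le> 2 * (\<integral>s. poisson s \<partial>\<nu>)" by (rule measure_unit_interval)
  finally show ?thesis by simp
qed


lemma cauchy2_estimate:
  fixes K n :: nat and \<eta> :: real
  assumes n: "n \<ge> 1" and \<eta>: "0 \<le> \<eta>" "\<eta> \<le> 1" and growth: "(1 + \<delta>) ^ (2 * 2 ^ K * n) \<le> 1 + \<eta>"
  shows "cmod (\<integral>s. cauchy2 s \<partial>\<nu>)
    \<le> (20 * 2 ^ K / n + 8 * 2 ^ K * \<eta> + 4 / 2 ^ K + 64 * (7/8) ^ K) * (\<integral>s. poisson s \<partial>\<nu>)"
proof -
  define R :: nat where "R = 2 ^ K"
  define P where "P = grid_cell (- real R) (1 / n)"
  define G where "G = (\<integral>s. poisson s \<partial>\<nu>)"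
  define X where "X = 10 * real R + 4 * real R * real n * \<eta> + 2 * real n / real R"
  have R: "R \<ge> 1" and np: "real n > 0" using n by (simp_all add: R_def)
  have "measure \<nu> (P 0) \<le> 2 * measure \<nu> (P j)" if "j < 2 * R * n" for j
    using grid_cells_comparable(3)[of "1 / n" \<eta> "2 * R * n" j] np \<eta> growth that
    by (simp add: P_def R_def)
  then have base: "real n * measure \<nu> (P 0) \<le> 2 * G"
    using grid_base_cell_measure[OF R n] by (simp add: P_def G_def)
  have "- real R + real (2 * R * n) * (1 / n) = real R" using np by simp
  then have "(\<integral>s. cauchy2 s \<partial>\<nu>) = (\<Sum>j<2 * R * n. \<integral>s. indicator (P j) s *\<^sub>R cauchy2 s \<partial>\<nu>)
      + (\<integral>s. indicator (- {- real R..<real R}) s *\<^sub>R cauchy2 s \<partial>\<nu>)"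
    using integral_grid_split[OF integrable_cauchy2, where h = "1 / n" and N = "2 * R * n" and c = "- real R"]
    by (simp add: P_def)
  then have "cmod (\<integral>s. cauchy2 s \<partial>\<nu>)
      \<le> cmod (\<Sum>j<2 * R * n. \<integral>s. indicator (P j) s *\<^sub>R cauchy2 s \<partial>\<nu>)
        + cmod (\<integral>s. indicator (- {- real R..<real R}) s *\<^sub>R cauchy2 s \<partial>\<nu>)"
    by (simp add: norm_triangle_ineq)
  also have "\<dots> \<le> measure \<nu> (P 0) * X + 64 * (7/8) ^ K * G"
    using grid_sum_estimate[OF R n \<eta> growth[folded R_def]] cauchy2_tail[of K]
    by (intro add_mono) (simp_all add: P_def X_def G_def R_def)
  also have "measure \<nu> (P 0) * X \<le> (2 * G / n) * X"
    using base np \<eta> by (intro mult_right_mono) (auto simp: X_def field_simps)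
  also have "(2 * G / n) * X = (20 * real R / n + 8 * real R * \<eta> + 4 / real R) * G"
    using np R by (simp add: X_def field_simps)
  finally show ?thesis by (simp add: R_def G_def algebra_simps)
qed

end

lemma small_growth_rate:
  fixes N :: nat and \<eta> :: real
  assumes "N > 0" "\<eta> > 0"
  shows "\<exists>\<delta>>0. \<delta> \<le> 1/4 \<and> (1 + \<delta>) ^ N \<le> 1 + \<eta>"
proof -
  define \<delta> where "\<delta> = min (1/4) (ln (1 + \<eta>) / N)"
  have \<delta>: "\<delta> > 0" "\<delta> \<le> 1/4"
    using assms unfolding \<delta>_def by (simp, simp only: min.cobounded1)
  have "(1 + \<delta>) ^ N \<le> exp \<delta> ^ N"
    using \<delta> exp_ge_add_one_self[of \<delta>] by (intro power_mono) (auto simp: add.commute)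
  also have "\<dots> = exp (N * \<delta>)" by (simp add: exp_of_nat_mult)
  also have "N * \<delta> \<le> ln (1 + \<eta>)"
    using assms by (simp add: \<delta>_def min_def field_simps)
  also have "exp (ln (1 + \<eta>)) = 1 + \<eta>" using assms by simp
  finally show ?thesis using \<delta> by auto
qed

lemma error_terms_small:
  assumes "\<epsilon> > 0"
  shows "\<exists>K n \<eta>. n \<ge> (1::nat) \<and> 0 < \<eta> \<and> \<eta> \<le> 1
    \<and> 20 * 2 ^ K / n + 8 * 2 ^ K * \<eta> + 4 / 2 ^ K + 64 * (7/8) ^ K \<le> (\<epsilon>::real)"
proof -
  obtain K where K: "(7/8::real) ^ K < \<epsilon> / 204"
    using real_arch_pow_inv[of "\<epsilon> / 204" "7/8"] assms by auto
  have "(1/2::real) ^ K \<le> (7/8) ^ K" by (rule power_mono) auto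
  then have "4 / 2 ^ K \<le> 4 * (7/8::real) ^ K" by (simp add: power_divide)
  then have tail: "4 / 2 ^ K + 64 * (7/8) ^ K \<le> \<epsilon> / 3" using K by linarith
  obtain n :: nat where n: "60 * 2 ^ K / \<epsilon> < n" using reals_Archimedean2 by blast
  then have "n \<ge> 1" using assms by (cases n) (auto simp: divide_less_0_iff)
  have "60 * 2 ^ K < \<epsilon> * n" using n assms by (simp add: divide_less_eq mult.commute)
  then have grid: "20 * 2 ^ K / n \<le> \<epsilon> / 3" using \<open>n \<ge> 1\<close> by (simp add: divide_le_eq field_simps)
  define \<eta> where "\<eta> = min 1 (\<epsilon> / (24 * 2 ^ K))"
  have \<eta>: "0 < \<eta>" "\<eta> \<le> 1" using assms by (auto simp: \<eta>_def)
  have "8 * 2 ^ K * \<eta> \<le> 8 * 2 ^ K * (\<epsilon> / (24 * 2 ^ K))"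
    by (intro mult_left_mono) (auto simp: \<eta>_def)
  then have "8 * 2 ^ K * \<eta> \<le> \<epsilon> / 3" by simp
  with tail grid have "20 * 2 ^ K / n + 8 * 2 ^ K * \<eta> + 4 / 2 ^ K + 64 * (7/8) ^ K \<le> \<epsilon>"
    by linarith
  with \<eta> \<open>n \<ge> 1\<close> show ?thesis by blast
qed

lemma estimate_at_i:
  assumes "\<epsilon> > 0"
  shows "\<exists>\<delta>>0. \<forall>\<nu>. quasi_symmetric \<nu> \<delta> \<longrightarrow>
    (\<integral>\<^sup>+s. ennreal (poisson s) \<partial>\<nu>) < \<infinity> \<and> cmod (\<integral>s. cauchy2 s \<partial>\<nu>) \<le> \<epsilon> * (\<integral>s. poisson s \<partial>\<nu>)"
proof -
  obtain K n :: nat and \<eta> :: real where n: "n \<ge> 1" and \<eta>: "0 < \<eta>" "\<eta> \<le> 1"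
    and small: "20 * 2 ^ K / n + 8 * 2 ^ K * \<eta> + 4 / 2 ^ K + 64 * (7/8) ^ K \<le> \<epsilon>"
    using error_terms_small[OF assms] by blast
  obtain \<delta> where \<delta>: "\<delta> > 0" "\<delta> \<le> 1/4" and growth: "(1 + \<delta>) ^ (2 * 2 ^ K * n) \<le> 1 + \<eta>"
    using small_growth_rate[of "2 * 2 ^ K * n" \<eta>] n \<eta> by auto
  have "(\<integral>\<^sup>+s. ennreal (poisson s) \<partial>\<nu>) < \<infinity> \<and> cmod (\<integral>s. cauchy2 s \<partial>\<nu>) \<le> \<epsilon> * (\<integral>s. poisson s \<partial>\<nu>)"
    if "quasi_symmetric \<nu> \<delta>" for \<nu>
  proof -
    interpret quasi_symmetric_small \<nu> \<delta>
      using that \<delta> by (simp add: quasi_symmetric_small_def quasi_symmetric_small_axioms_def)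
    have "0 \<le> (\<integral>s. poisson s \<partial>\<nu>)" using poisson_pos by (simp add: less_imp_le)
    then have "(20 * 2 ^ K / n + 8 * 2 ^ K * \<eta> + 4 / 2 ^ K + 64 * (7/8) ^ K) * (\<integral>s. poisson s \<partial>\<nu>)
        \<le> \<epsilon> * (\<integral>s. poisson s \<partial>\<nu>)"
      using small by (rule mult_right_mono[rotated])
    then show ?thesis
      using cauchy2_estimate[OF n less_imp_le[OF \<eta>(1)] \<eta>(2) growth] poisson_nn_integral_finite
      by linarith
  qed
  with \<delta> show ?thesis by blast
qed

text \<open>The push-forward of M under the affine map t |-> (t - Re z)/Im z, which sends z to i.\<close>
definition rescale :: "complex \<Rightarrow> real measure \<Rightarrow> real measure" where
  "rescale z M = distr M borel (\<lambda>t. (t - Re z) / Im z)"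

lemma measurable_rescale_map:
  assumes "sets M = sets borel"
  shows "(\<lambda>t. (t - Re z) / Im z) \<in> measurable M borel"
proof -
  have "(\<lambda>t. (t - Re z) / Im z) \<in> borel_measurable borel" by measurable
  then show ?thesis using measurable_cong_sets[OF assms refl] by blast
qed

lemma emeasure_rescale_interval:
  assumes M: "sets M = sets borel" and z: "Im z > 0"
  shows "emeasure (rescale z M) {c..d} = emeasure M {Re z + Im z * c..Re z + Im z * d}"
proof -
  have "(\<lambda>t. (t - Re z) / Im z) -` {c..d} = {Re z + Im z * c..Re z + Im z * d}"
    using z by (auto simp: field_simps)
  then show ?thesis
    using sets_eq_imp_space_eq[OF M] measurable_rescale_map[OF M]
    by (simp add: rescale_def emeasure_distr)
qed

text \<open>The affine map sending z to i maps adjacent intervals of equal length to adjacent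
  intervals of equal length, so it preserves quasi-symmetry.\<close>
lemma quasi_symmetric_rescale:
  assumes M: "radon_measure_real M" and adj: "adj_interval_cond \<delta> M"
    and \<delta>: "0 \<le> \<delta>" and z: "Im z > 0"
  shows "quasi_symmetric (rescale z M) \<delta>"
proof
  have sets_M: "sets M = sets borel" using M by (simp add: radon_measure_real_def)
  note interval = emeasure_rescale_interval[OF sets_M z]
  show "sets (rescale z M) = sets borel" by (simp add: rescale_def)
  show "emeasure (rescale z M) {a..b} < \<infinity>" for a b
    using M by (simp add: interval radon_measure_real_def)
  show "adj_interval_cond \<delta> (rescale z M)"
    unfolding adj_interval_cond_def
  proof (intro allI impI)
    fix x h :: real assume "h > 0"
    define X where "X = Re z + Im z * x"
    define H where "H = Im z * h"
    have "H > 0" using \<open>h > 0\<close> z by (simp add: H_def)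
    have "emeasure (rescale z M) {x - h..x} = emeasure M {X - H..X}"
      and "emeasure (rescale z M) {x..x + h} = emeasure M {X..X + H}"
      unfolding interval X_def H_def by (simp_all add: algebra_simps)
    then show "emeasure (rescale z M) {x - h..x} \<le> ennreal (1 + \<delta>) * emeasure (rescale z M) {x..x + h}
      \<and> emeasure (rescale z M) {x..x + h} \<le> ennreal (1 + \<delta>) * emeasure (rescale z M) {x - h..x}"
      using adj \<open>H > 0\<close> unfolding adj_interval_cond_def by simp
  qed
  show "0 \<le> \<delta>" by (rule \<delta>)
qed

lemma poisson_rescale:
  assumes "Im z > 0"
  shows "poisson ((t - Re z) / Im z) = (Im z)\<^sup>2 * (1 / (cmod (complex_of_real t - z))\<^sup>2)"
proof -
  have "(cmod (complex_of_real t - z))\<^sup>2 = (t - Re z)\<^sup>2 + (Im z)\<^sup>2" by (simp add: cmod_power2)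
  then show ?thesis using assms by (simp add: poisson_def field_simps power2_eq_square)
qed

lemma cauchy2_rescale:
  assumes "Im z > 0"
  shows "cauchy2 ((t - Re z) / Im z) = complex_of_real ((Im z)\<^sup>2) * (1 / (complex_of_real t - z)\<^sup>2)"
proof -
  have "complex_of_real ((t - Re z) / Im z) - \<i> = (complex_of_real t - z) / complex_of_real (Im z)"
    using assms by (simp add: complex_eq_iff field_simps)
  then show ?thesis using assms by (simp add: cauchy2_def power_divide)
qed

lemma integrals_rescale:
  assumes M: "sets M = sets borel" and z: "Im z > 0"
  shows "(\<integral>\<^sup>+s. ennreal (poisson s) \<partial>rescale z M)
      = ennreal ((Im z)\<^sup>2) * (\<integral>\<^sup>+t. ennreal (1 / (cmod (complex_of_real t - z))\<^sup>2) \<partial>M)"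
    and "(\<integral>s. poisson s \<partial>rescale z M) = (Im z)\<^sup>2 * (\<integral>t. 1 / (cmod (complex_of_real t - z))\<^sup>2 \<partial>M)"
    and "(\<integral>s. cauchy2 s \<partial>rescale z M)
      = complex_of_real ((Im z)\<^sup>2) * (\<integral>t. 1 / (complex_of_real t - z)\<^sup>2 \<partial>M)"
proof -
  note map = measurable_rescale_map[OF M, of z]
  have "(\<integral>\<^sup>+s. ennreal (poisson s) \<partial>rescale z M)
      = (\<integral>\<^sup>+t. ennreal ((Im z)\<^sup>2) * ennreal (1 / (cmod (complex_of_real t - z))\<^sup>2) \<partial>M)"
  proof -
    have "(\<integral>\<^sup>+s. ennreal (poisson s) \<partial>rescale z M) = (\<integral>\<^sup>+t. ennreal (poisson ((t - Re z) / Im z)) \<partial>M)"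
      unfolding rescale_def using map by (simp add: nn_integral_distr)
    also have "\<dots> = (\<integral>\<^sup>+t. ennreal ((Im z)\<^sup>2) * ennreal (1 / (cmod (complex_of_real t - z))\<^sup>2) \<partial>M)"
      unfolding poisson_rescale[OF z] by (intro nn_integral_cong ennreal_mult) auto
    finally show ?thesis .
  qed
  also have "\<dots> = ennreal ((Im z)\<^sup>2) * (\<integral>\<^sup>+t. ennreal (1 / (cmod (complex_of_real t - z))\<^sup>2) \<partial>M)"
  proof (rule nn_integral_cmult)
    have "(\<lambda>t. ennreal (1 / (cmod (complex_of_real t - z))\<^sup>2)) \<in> borel_measurable borel" by measurable
    then show "(\<lambda>t. ennreal (1 / (cmod (complex_of_real t - z))\<^sup>2)) \<in> borel_measurable M"
      using measurable_cong_sets[OF M refl] by blast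
  qed
  finally show "(\<integral>\<^sup>+s. ennreal (poisson s) \<partial>rescale z M)
      = ennreal ((Im z)\<^sup>2) * (\<integral>\<^sup>+t. ennreal (1 / (cmod (complex_of_real t - z))\<^sup>2) \<partial>M)" .
  show "(\<integral>s. poisson s \<partial>rescale z M) = (Im z)\<^sup>2 * (\<integral>t. 1 / (cmod (complex_of_real t - z))\<^sup>2 \<partial>M)"
    unfolding rescale_def integral_distr[OF map borel_measurable_poisson] poisson_rescale[OF z]
    by (rule integral_mult_right_zero)
  show "(\<integral>s. cauchy2 s \<partial>rescale z M)
      = complex_of_real ((Im z)\<^sup>2) * (\<integral>t. 1 / (complex_of_real t - z)\<^sup>2 \<partial>M)"
    unfolding rescale_def integral_distr[OF map borel_measurable_cauchy2] cauchy2_rescale[OF z]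
    by (rule integral_mult_right_zero)
qed

theorem lemma4p1:
  fixes \<epsilon> :: real
  assumes "\<epsilon> > 0"
  shows "\<exists>\<delta>>0. \<forall>M z. radon_measure_real M \<and> adj_interval_cond \<delta> M \<and> Im z > 0 \<longrightarrow>
           (\<integral>\<^sup>+ t. ennreal (1 / (cmod (complex_of_real t - z))\<^sup>2) \<partial>M) < \<infinity> \<and>
           cmod (\<integral> t. 1 / (complex_of_real t - z)\<^sup>2 \<partial>M)
             \<le> \<epsilon> * (\<integral> t. 1 / (cmod (complex_of_real t - z))\<^sup>2 \<partial>M)"
proof -
  obtain \<delta> where \<delta>: "\<delta> > 0" and at_i: "\<And>\<nu>. quasi_symmetric \<nu> \<delta> \<Longrightarrow>
      (\<integral>\<^sup>+s. ennreal (poisson s) \<partial>\<nu>) < \<infinity> \<and> cmod (\<integral>s. cauchy2 s \<partial>\<nu>) \<le> \<epsilon> * (\<integral>s. poisson s \<partial>\<nu>)"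
    using estimate_at_i[OF assms] by blast
  have "(\<integral>\<^sup>+t. ennreal (1 / (cmod (complex_of_real t - z))\<^sup>2) \<partial>M) < \<infinity> \<and>
      cmod (\<integral>t. 1 / (complex_of_real t - z)\<^sup>2 \<partial>M) \<le> \<epsilon> * (\<integral>t. 1 / (cmod (complex_of_real t - z))\<^sup>2 \<partial>M)"
    if M: "radon_measure_real M" and adj: "adj_interval_cond \<delta> M" and z: "Im z > 0" for M z
  proof (intro conjI)
    have sets_M: "sets M = sets borel" using M by (simp add: radon_measure_real_def)
    have y: "(Im z)\<^sup>2 > 0" using z by simp
    note estimate = at_i[OF quasi_symmetric_rescale[OF M adj less_imp_le[OF \<delta>] z],
        unfolded integrals_rescale[OF sets_M z]]
    then show "(\<integral>\<^sup>+t. ennreal (1 / (cmod (complex_of_real t - z))\<^sup>2) \<partial>M) < \<infinity>"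
      using y by (auto simp: ennreal_mult_less_top)
    from estimate have "(Im z)\<^sup>2 * cmod (\<integral>t. 1 / (complex_of_real t - z)\<^sup>2 \<partial>M)
        \<le> (Im z)\<^sup>2 * (\<epsilon> * (\<integral>t. 1 / (cmod (complex_of_real t - z))\<^sup>2 \<partial>M))"
      by (simp add: norm_mult norm_power mult.left_commute[of \<epsilon>])
    then show "cmod (\<integral>t. 1 / (complex_of_real t - z)\<^sup>2 \<partial>M)
        \<le> \<epsilon> * (\<integral>t. 1 / (cmod (complex_of_real t - z))\<^sup>2 \<partial>M)"
      using y by simp
  qed
  with \<delta> show ?thesis by blast
qed

end
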